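(* For $i=1,\dots,d$ let $\omega_i\subseteq\mathbb{R}$ be a nonempty open interval and $f_i:\omega_i\to\mathbb{R}$ a univariate function of Legendre type; let $\Omega=\prod_{i=1}^d\omega_i$ and $F(x)=\sum_{i=1}^d f_i(x_i)$ on $\Omega$, with Bregman divergence $D_F$. Let $P=\{x\in\mathbb{R}^d: x_j=c\}$ be an axis-aligned hyperplane (for some $j\in\{1,\dots,d\}$, $c\in\mathbb{R}$) with $P\cap\Omega\neq\emptyset$, and let $q\in\Omega$. Then the orthogonal projection $q_P=(q_1,\dots,q_{j-1},c,q_{j+1},\dots,q_d)$ of $q$ onto $P$ lies in $P\cap\Omega$ and is the unique minimizer over $p\in P\cap\Omega$ of $D_F(q\|p)$, and also the unique minimizer over $p\in P\cap\Omega$ of $D_F(p\|q)$; i.e. the Bregman projection of $q$ onto $P$, computed in either direction, coincides with the orthogonal projection.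
   Context: A function $G:U\to\mathbb{R}$ on a nonempty open convex set $U$ is of Legendre type if it is differentiable, strictly convex, and, if $\partial U\neq\emptyset$, $\|\nabla G(x)\|\to\infty$ as $x\to\partial U$. The Bregman divergence generated by $G$ is $D_G(x\|y)=G(x)-G(y)-\langle\nabla G(y),x-y\rangle$. For $F=\sum_i f_i(x_i)$ one has $D_F(x\|y)=\sum_i D_{f_i}(x_i\|y_i)$. *)

theory Defs
  imports "HOL-Analysis.Analysis"
begin

definition strictly_convex_on :: "'a::real_vector set \<Rightarrow> ('a \<Rightarrow> real) \<Rightarrow> bool" where
  "strictly_convex_on U G \<longleftrightarrow> convex U \<and>
     (\<forall>x\<in>U. \<forall>y\<in>U. \<forall>t::real. x \<noteq> y \<and> 0 < t \<and> t < 1 \<longrightarrow>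
        G ((1 - t) *\<^sub>R x + t *\<^sub>R y) < (1 - t) * G x + t * G y)"

definition legendre_type_1 :: "real set \<Rightarrow> (real \<Rightarrow> real) \<Rightarrow> bool" where
  "legendre_type_1 U g \<longleftrightarrow> U \<noteq> {} \<and> open U \<and> is_interval U \<and>
     (\<forall>x\<in>U. g differentiable (at x)) \<and>
     strictly_convex_on U g \<and>
     (\<forall>x0\<in>frontier U. filterlim (\<lambda>x. \<bar>deriv g x\<bar>) at_top (at x0 within U))"

text \<open>Bregman divergence D_G(x||y) = G x - G y - <grad G(y), x - y>, where the inner product
  with the gradient is the Frechet derivative of G at y applied to x - y.\<close>
definition bregman :: "('a::real_normed_vector \<Rightarrow> real) \<Rightarrow> 'a \<Rightarrow> 'a \<Rightarrow> real" where
  "bregman G x y = G x - G y - frechet_derivative G (at y) (x - y)"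

end

theory Submission
  imports Defs
begin

text \<open>The divergence of a separable function splits into univariate divergences,
  D_F(x||y) = \<Sum>i. D_{f_i}(x_i||y_i), and each of these is positive off the diagonal by
  strict convexity. For p on the hyperplane x_j = c the j-th summand does not depend on p,
  while every other summand is minimised, with value 0, exactly at p_i = q_i.\<close>

lemma strictly_convex_on_imp_convex_on:
  assumes "strictly_convex_on U g"
  shows "convex_on U g"
proof
  show "convex U" using assms unfolding strictly_convex_on_def by blast
  fix t :: real and x y assume "0 < t" "t < 1" "x \<in> U" "y \<in> U"
  moreover have "x \<noteq> y \<Longrightarrow> g ((1 - t) *\<^sub>R x + t *\<^sub>R y) < (1 - t) * g x + t * g y"
    using assms calculation unfolding strictly_convex_on_def by blast
  ultimately show "g ((1 - t) *\<^sub>R x + t *\<^sub>R y) \<le> (1 - t) * g x + t * g y"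
    by (cases "x = y") (auto simp: scaleR_collapse algebra_simps)
qed

lemma bregman_real:
  fixes g :: "real \<Rightarrow> real"
  assumes "g differentiable (at b)"
  shows "bregman g a b = g a - g b - deriv g b * (a - b)"
proof -
  have "(g has_derivative (\<lambda>h. deriv g b * h)) (at b)"
    using assms by (simp add: DERIV_deriv_iff_real_differentiable has_field_derivative_imp_has_derivative)
  then show ?thesis
    unfolding bregman_def by (simp flip: frechet_derivative_at)
qed

lemma bregman_pos_if_strictly_convex_on:
  fixes g :: "real \<Rightarrow> real"
  assumes sc: "strictly_convex_on U g" and "open U" and dif: "g differentiable (at b)"
    and a: "a \<in> U" and b: "b \<in> U" and "a \<noteq> b"
  shows "bregman g a b > 0"
proof -
  define m where "m = (1 - 1/2) *\<^sub>R b + (1/2::real) *\<^sub>R a"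
  have "convex U" using sc unfolding strictly_convex_on_def by blast
  then have m: "m \<in> U" unfolding m_def using a b by (intro convexD) auto
  have "(g has_field_derivative deriv g b) (at b within U)"
    using dif by (simp add: DERIV_deriv_iff_real_differentiable has_field_derivative_at_within)
  then have tangent: "g m - g b \<ge> deriv g b * (m - b)"
    using strictly_convex_on_imp_convex_on[OF sc] \<open>convex U\<close> \<open>open U\<close> b m
    by (intro convex_on_imp_above_tangent) (auto simp: convex_connected interior_open)
  have "g ((1 - t) *\<^sub>R b + t *\<^sub>R a) < (1 - t) * g b + t * g a" if "0 < t" "t < 1" for t
    using sc b a \<open>a \<noteq> b\<close> that unfolding strictly_convex_on_def by auto
  from this[of "1/2"] have "g m < (1 - 1/2) * g b + (1/2) * g a"
    unfolding m_def by simp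
  with tangent show ?thesis
    unfolding bregman_real[OF dif] m_def by (simp add: algebra_simps)
qed

lemma bregman_separable:
  fixes f :: "'d::finite \<Rightarrow> real \<Rightarrow> real" and x y :: "real ^ 'd"
  assumes "\<And>i. f i differentiable (at (y $ i))"
  shows "bregman (\<lambda>x. \<Sum>i\<in>UNIV. f i (x $ i)) x y = (\<Sum>i\<in>UNIV. bregman (f i) (x $ i) (y $ i))"
proof -
  have "((\<lambda>x. f i (x $ i)) has_derivative (\<lambda>h. frechet_derivative (f i) (at (y $ i)) (h $ i))) (at y)"
    for i
    using diff_chain_at[OF bounded_linear.has_derivative[OF bounded_linear_vec_nth has_derivative_ident]
        frechet_derivative_works[THEN iffD1, OF assms]]
    by (simp add: o_def)
  then have "((\<lambda>x. \<Sum>i\<in>UNIV. f i (x $ i)) has_derivative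
      (\<lambda>h. \<Sum>i\<in>UNIV. frechet_derivative (f i) (at (y $ i)) (h $ i))) (at y)"
    by (rule has_derivative_sum)
  then show ?thesis
    unfolding bregman_def by (simp add: sum_subtractf flip: frechet_derivative_at)
qed

lemma sum_less_at_coordinate_projection:
  fixes D :: "'d::finite \<Rightarrow> real \<Rightarrow> real \<Rightarrow> real" and p q r :: "real ^ 'd"
  assumes zero: "\<And>i a. a \<in> \<omega> i \<Longrightarrow> D i a a = 0"
    and pos: "\<And>i a b. a \<in> \<omega> i \<Longrightarrow> b \<in> \<omega> i \<Longrightarrow> a \<noteq> b \<Longrightarrow> D i a b > 0"
    and q: "\<forall>i. q $ i \<in> \<omega> i" and p: "\<forall>i. p $ i \<in> \<omega> i"
    and r_j: "r $ j = p $ j" and r_off: "\<And>i. i \<noteq> j \<Longrightarrow> r $ i = q $ i" and "p \<noteq> r"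
  shows "(\<Sum>i\<in>UNIV. D i (q $ i) (r $ i)) < (\<Sum>i\<in>UNIV. D i (q $ i) (p $ i))"
proof (rule sum_strict_mono_ex1)
  have "D i (q $ i) (p $ i) \<ge> 0" for i
    using zero pos q p by (cases "p $ i = q $ i") (auto intro: less_imp_le)
  then show "\<forall>i\<in>UNIV. D i (q $ i) (r $ i) \<le> D i (q $ i) (p $ i)"
    using zero q r_j r_off by (metis order.refl)
  obtain k where k: "p $ k \<noteq> r $ k"
    using \<open>p \<noteq> r\<close> by (metis vec_eq_iff)
  with r_j have "k \<noteq> j" by auto
  with k r_off have "p $ k \<noteq> q $ k" by simp
  with \<open>k \<noteq> j\<close> show "\<exists>i\<in>UNIV. D i (q $ i) (r $ i) < D i (q $ i) (p $ i)"
    using zero[of "q $ k" k] pos[of "q $ k" k "p $ k"] q p r_off by (intro bexI[of _ k]) auto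
qed simp

theorem lemma5:
  fixes \<omega> :: "'d::finite \<Rightarrow> real set"
    and f :: "'d \<Rightarrow> real \<Rightarrow> real"
    and j :: 'd and c :: real and q :: "real ^ 'd"
  assumes leg: "\<forall>i. legendre_type_1 (\<omega> i) (f i)"
    and nonempty: "{x :: real ^ 'd. x $ j = c} \<inter> {x. \<forall>i. x $ i \<in> \<omega> i} \<noteq> {}"
    and q: "q \<in> {x. \<forall>i. x $ i \<in> \<omega> i}"
  shows "let \<Omega> = {x :: real ^ 'd. \<forall>i. x $ i \<in> \<omega> i};
             F = (\<lambda>x :: real ^ 'd. \<Sum>i\<in>UNIV. f i (x $ i));
             P = {x :: real ^ 'd. x $ j = c};
             qP = (\<chi> i. if i = j then c else q $ i)
         in qP \<in> P \<inter> \<Omega> \<and>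
            (\<forall>p\<in>P \<inter> \<Omega>. p \<noteq> qP \<longrightarrow> bregman F q qP < bregman F q p) \<and>
            (\<forall>p\<in>P \<inter> \<Omega>. p \<noteq> qP \<longrightarrow> bregman F qP q < bregman F p q)"
proof -
  define F where "F = (\<lambda>x :: real ^ 'd. \<Sum>i\<in>UNIV. f i (x $ i))"
  define qP where "qP = (\<chi> i. if i = j then c else q $ i :: real ^ 'd)"
  have dif: "a \<in> \<omega> i \<Longrightarrow> f i differentiable (at a)" for i a
    using leg unfolding legendre_type_1_def by blast
  have zero: "a \<in> \<omega> i \<Longrightarrow> bregman (f i) a a = 0" for i a
    by (simp add: bregman_real dif)
  have pos: "a \<in> \<omega> i \<Longrightarrow> b \<in> \<omega> i \<Longrightarrow> a \<noteq> b \<Longrightarrow> bregman (f i) a b > 0" for i a b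
    using leg dif unfolding legendre_type_1_def by (blast intro: bregman_pos_if_strictly_convex_on)
  have F: "\<forall>i. y $ i \<in> \<omega> i \<Longrightarrow> bregman F x y = (\<Sum>i\<in>UNIV. bregman (f i) (x $ i) (y $ i))" for x y
    unfolding F_def by (intro bregman_separable dif) blast
  have q_in: "\<forall>i. q $ i \<in> \<omega> i" and qP_in: "\<forall>i. qP $ i \<in> \<omega> i"
    using nonempty q unfolding qP_def by auto
  have qP_off: "\<And>i. i \<noteq> j \<Longrightarrow> qP $ i = q $ i"
    unfolding qP_def by simp
  have "bregman F q qP < bregman F q p" "bregman F qP q < bregman F p q"
    if "p \<in> {x. x $ j = c} \<inter> {x. \<forall>i. x $ i \<in> \<omega> i}" "p \<noteq> qP" for p
  proof -
    have p_in: "\<forall>i. p $ i \<in> \<omega> i" and qP_j: "qP $ j = p $ j"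
      using that unfolding qP_def by auto
    have "(\<Sum>i\<in>UNIV. bregman (f i) (q $ i) (qP $ i)) < (\<Sum>i\<in>UNIV. bregman (f i) (q $ i) (p $ i))"
      using zero pos q_in p_in qP_j qP_off \<open>p \<noteq> qP\<close>
      by (intro sum_less_at_coordinate_projection[where \<omega> = \<omega>]) auto
    then show "bregman F q qP < bregman F q p"
      by (simp add: F p_in qP_in)
    have "(\<Sum>i\<in>UNIV. bregman (f i) (qP $ i) (q $ i)) < (\<Sum>i\<in>UNIV. bregman (f i) (p $ i) (q $ i))"
      using zero pos q_in p_in qP_j qP_off \<open>p \<noteq> qP\<close>
      by (intro sum_less_at_coordinate_projection[where \<omega> = \<omega> and D = "\<lambda>i a b. bregman (f i) b a"]) auto
    then show "bregman F qP q < bregman F p q"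
      by (simp add: F q_in)
  qed
  moreover have "qP \<in> {x. x $ j = c} \<inter> {x. \<forall>i. x $ i \<in> \<omega> i}"
    using qP_in unfolding qP_def by simp
  ultimately show ?thesis
    unfolding Let_def F_def[symmetric] qP_def[symmetric] by blast
qed

end
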